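(* Let $r\ge2$ be an integer, $m,\ell$ positive integers with $r<2^m$, let $\alpha_0$ be a real number with $\alpha_0\in(-r/2,r/2]$, and let $B$ be an integer with $1\le B<B_{\max}=(2^{m+\ell}/r-1)/2$. Then $$\sum_{t=-B}^{B}P(\alpha_0+rt)\ \ge\ \frac1r\left(1-\frac{1}{\pi^2}\left(\frac{2}{B}+\frac{1}{B^2}+\frac{1}{3B^3}\right)\right)-\frac{\pi^2(2B+1)}{2^{m+\ell}}.$$
   Context: Let $\beta=2^{m+\ell}\bmod r$ and $L=\lfloor 2^{m+\ell}/r\rfloor$. For real $\alpha$ not a multiple of $2^{m+\ell}$, $$P(\alpha)=\frac{\beta}{2^{2(m+\ell)}}\cdot\frac{1-\cos(2\pi\alpha(L+1)/2^{m+\ell})}{1-\cos(2\pi\alpha/2^{m+\ell})}+\frac{r-\beta}{2^{2(m+\ell)}}\cdot\frac{1-\cos(2\pi\alpha L/2^{m+\ell})}{1-\cos(2\pi\alpha/2^{m+\ell})},$$ and $P(0)=(L^2r+(2L+1)\beta)/2^{2(m+\ell)}$. *)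

theory Defs
  imports "HOL-Analysis.Analysis"
begin

(* P(alpha) from the paper, with parameters r, m, l.  N = 2^(m+l),
   beta = N mod r, L = N div r.  At multiples of N the formula is replaced
   by its (continuous, periodic) value P(0). *)
definition Pfun :: "nat \<Rightarrow> nat \<Rightarrow> nat \<Rightarrow> real \<Rightarrow> real" where
  "Pfun r m l \<alpha> =
    (let N = (2::nat) ^ (m + l); \<beta> = N mod r; L = N div r in
     if \<alpha> / real N \<in> \<int> then
       (real L ^ 2 * real r + (2 * real L + 1) * real \<beta>) / real N ^ 2
     else
       real \<beta> / real N ^ 2 *
         ((1 - cos (2 * pi * \<alpha> * real (L + 1) / real N)) / (1 - cos (2 * pi * \<alpha> / real N)))
     + (real r - real \<beta>) / real N ^ 2 *
         ((1 - cos (2 * pi * \<alpha> * real L / real N)) / (1 - cos (2 * pi * \<alpha> / real N))))"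

end

theory Submission
  imports Defs
begin

text \<open>Writing \<open>N = L r + \<beta>\<close> and \<open>\<phi> = \<pi> \<alpha> / N\<close>, \<open>P(\<alpha>)\<close> is a weighted average of
  \<open>sin\<^sup>2((L + 1)\<phi>)\<close> and \<open>sin\<^sup>2(L\<phi>)\<close> divided by \<open>N\<^sup>2 sin\<^sup>2 \<phi>\<close>. The two frequencies
  straddle \<open>N / r\<close> with weights that cancel the first-order Taylor terms, so up to \<open>3 / N\<close>
  the function \<open>P\<close> dominates \<open>(1/r) sinc\<^sup>2(\<alpha> / r)\<close>. Summing this kernel over
  \<open>\<alpha>\<^sub>0 + r t\<close> gives \<open>sin\<^sup>2(\<pi> u) / (\<pi>\<^sup>2 r)\<close> times \<open>\<Sum> 1 / (u + t)\<^sup>2\<close> with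
  \<open>u = \<alpha>\<^sub>0 / r\<close>; the full series over \<open>t \<in> \<int>\<close> equals \<open>\<pi>\<^sup>2 / sin\<^sup>2(\<pi> u)\<close>
  (reflection formula for the trigamma function) and its tails beyond \<open>|t| \<le> B\<close> are
  at most \<open>2 / B\<close>.\<close>

text \<open>No hypothesis is needed: at integers both sides are \<open>0\<close>, as \<open>Gamma\<close> vanishes at its
  poles and \<open>x / 0 = 0\<close>.\<close>

lemma Gamma_reflection_real:
  fixes x :: real
  shows "Gamma x * Gamma (1 - x) = pi / sin (pi * x)"
proof -
  have "Gamma (complex_of_real x) * Gamma (1 - complex_of_real x)
      = of_real pi / sin (of_real pi * of_real x)"
    by (rule Gamma_reflection_complex)
  also have "Gamma (1 - complex_of_real x) = of_real (Gamma (1 - x))"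
    using Gamma_complex_of_real[of "1 - x"] by simp
  also have "sin (complex_of_real pi * of_real x) = of_real (sin (pi * x))"
    by (simp flip: sin_of_real)
  finally have "complex_of_real (Gamma x * Gamma (1 - x)) = complex_of_real (pi / sin (pi * x))"
    by (simp add: Gamma_complex_of_real)
  then show ?thesis
    by (simp only: of_real_eq_iff)
qed

lemma not_Ints_reflection_conditions:
  fixes x :: real assumes "x \<notin> \<int>"
  shows "sin (pi * x) \<noteq> 0" "x \<notin> \<int>\<^sub>\<le>\<^sub>0" "1 - x \<notin> \<int>\<^sub>\<le>\<^sub>0"
proof -
  show "sin (pi * x) \<noteq> 0"
    using assms by (auto simp: sin_zero_iff_int2)
  show "x \<notin> \<int>\<^sub>\<le>\<^sub>0"
    using assms nonpos_Ints_subset_Ints by blast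
  have "1 - x \<notin> \<int>"
    using assms Ints_diff[OF Ints_1, of "1 - x"] by auto
  then show "1 - x \<notin> \<int>\<^sub>\<le>\<^sub>0"
    using nonpos_Ints_subset_Ints by blast
qed

lemma not_Ints_if_abs_less_one:
  fixes x :: real assumes "x \<noteq> 0" "\<bar>x\<bar> < 1"
  shows "x \<notin> \<int>"
  using assms by (auto elim!: Ints_cases)

lemma has_real_derivative_unique_on_open:
  fixes f g :: "real \<Rightarrow> real"
  assumes "open S" "x \<in> S" "\<And>y. y \<in> S \<Longrightarrow> f y = g y"
    and "(f has_real_derivative a) (at x)" "(g has_real_derivative b) (at x)"
  shows "a = b"
  using has_field_derivative_transform_within_open[OF assms(4,1,2,3)] assms(5) DERIV_unique
  by blast

text \<open>The next two reflection formulas come from differentiating the previous one on the open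
  set \<open>- \<int>\<close>.\<close>

lemma Digamma_reflection_real:
  fixes x :: real assumes x: "x \<notin> \<int>"
  shows "Digamma x - Digamma (1 - x) = - pi * cos (pi * x) / sin (pi * x)"
proof -
  note c = not_Ints_reflection_conditions[OF x]
  have "((\<lambda>y. Gamma y * Gamma (1 - y)) has_real_derivative
      Gamma x * Gamma (1 - x) * (Digamma x - Digamma (1 - x))) (at x)"
    by (insert c, (rule derivative_eq_intros refl | assumption)+) (simp add: algebra_simps)
  moreover have "((\<lambda>y. pi / sin (pi * y)) has_real_derivative
      - (pi * pi * cos (pi * x)) / (sin (pi * x) * sin (pi * x))) (at x)"
    by (insert c, (rule derivative_eq_intros refl | assumption)+) (simp add: algebra_simps)
  ultimately have "Gamma x * Gamma (1 - x) * (Digamma x - Digamma (1 - x))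
      = - (pi * pi * cos (pi * x)) / (sin (pi * x) * sin (pi * x))"
    by (rule has_real_derivative_unique_on_open[of "- \<int>", rotated 3])
      (use x Gamma_reflection_real in auto)
  then have eq: "pi / sin (pi * x) * (Digamma x - Digamma (1 - x))
      = - (pi * pi * cos (pi * x)) / (sin (pi * x) * sin (pi * x))"
    by (simp only: Gamma_reflection_real)
  have "Digamma x - Digamma (1 - x)
      = sin (pi * x) / pi * (pi / sin (pi * x) * (Digamma x - Digamma (1 - x)))"
    using c(1) by simp
  also have "\<dots> = - pi * cos (pi * x) / sin (pi * x)"
    unfolding eq using c(1) by (simp add: field_simps)
  finally show ?thesis .
qed

lemma Polygamma_one_reflection_real:
  fixes x :: real assumes x: "x \<notin> \<int>"
  shows "Polygamma 1 x + Polygamma 1 (1 - x) = pi ^ 2 / sin (pi * x) ^ 2"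
proof -
  note c = not_Ints_reflection_conditions[OF x]
  have "((\<lambda>y. Digamma y - Digamma (1 - y)) has_real_derivative
      Polygamma 1 x + Polygamma 1 (1 - x)) (at x)"
    by (insert c, (rule derivative_eq_intros refl | assumption)+) simp
  moreover have "((\<lambda>y. - pi * cos (pi * y) / sin (pi * y)) has_real_derivative
      pi ^ 2 / sin (pi * x) ^ 2) (at x)"
  proof -
    have sin_cos: "pi * (pi * (cos (pi * x) * cos (pi * x))) + pi * (pi * (sin (pi * x) * sin (pi * x)))
        = pi * pi"
      by (metis distrib_left mult_1_right sin_cos_squared_add3)
    show ?thesis
      by (insert c, (rule derivative_eq_intros refl | assumption)+)
        (simp add: algebra_simps power2_eq_square sin_cos)
  qed
  ultimately show ?thesis
    by (rule has_real_derivative_unique_on_open[of "- \<int>", rotated 3])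
      (use x Digamma_reflection_real in auto)
qed

lemma sums_le_telescoping_tail:
  fixes f :: "nat \<Rightarrow> real"
  assumes "f sums S" and "real K + s > 0"
    and "\<And>k. k \<ge> K \<Longrightarrow> f k \<le> 1 / (real k + s) - 1 / (real k + 1 + s)"
  shows "S \<le> (\<Sum>k<K. f k) + 1 / (real K + s)"
proof (rule LIMSEQ_le_const2)
  show "(\<lambda>n. \<Sum>k<n. f k) \<longlonglongrightarrow> S"
    using assms(1) by (simp add: sums_def)
  have partial: "(\<Sum>k<n. f k) \<le> (\<Sum>k<K. f k) + 1 / (real K + s) - 1 / (real n + s)"
    if "n \<ge> K" for n
    using that
  proof (induction n rule: dec_induct)
    case (step n)
    then show ?case
      using assms(3)[of n] by (simp add: add_ac)
  qed simp
  show "\<exists>N. \<forall>n\<ge>N. (\<Sum>k<n. f k) \<le> (\<Sum>k<K. f k) + 1 / (real K + s)"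
  proof (intro exI allI impI)
    fix n assume n: "n \<ge> K"
    then have "1 / (real n + s) > 0"
      using assms(2) by simp
    then show "(\<Sum>k<n. f k) \<le> (\<Sum>k<K. f k) + 1 / (real K + s)"
      using partial[OF n] by linarith
  qed
qed

lemma inverse_square_le_telescoping:
  fixes c y :: real assumes "c > 0" and "y \<ge> c + 1/2"
  shows "inverse (y ^ 2) \<le> 1 / c - 1 / (c + 1)"
proof -
  have "c * (c + 1) \<le> (c + 1/2) ^ 2"
    by (simp add: power2_eq_square algebra_simps)
  also have "\<dots> \<le> y ^ 2"
    using assms by (intro power_mono) auto
  finally have "inverse (y ^ 2) \<le> inverse (c * (c + 1))"
    using assms(1) by (intro le_imp_inverse_le) auto
  also have "\<dots> = 1 / c - 1 / (c + 1)"
    using assms(1) by (simp add: field_simps)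
  finally show ?thesis .
qed

lemma sum_int_symmetric_interval:
  fixes f :: "int \<Rightarrow> 'a::comm_monoid_add"
  shows "(\<Sum>t = - int b..int b. f t) = (\<Sum>k<Suc b. f (int k)) + (\<Sum>k<b. f (- int k - 1))"
proof (induction b)
  case (Suc b)
  have "{- int (Suc b)..int (Suc b)} = insert (- int b - 1) (insert (int b + 1) {- int b..int b})"
    by auto
  then show ?case
    using Suc.IH by (simp add: add_ac)
qed simp

text \<open>Both halves of the sum are partial sums of trigamma series, whose tails are
  telescoped away; the reflection formula then evaluates the full series.\<close>

lemma sum_inverse_square_shifts_ge:
  fixes u :: real and b :: nat
  assumes "-1/2 < u" "u \<le> 1/2" "u \<noteq> 0" "b \<ge> 1"
  shows "(\<Sum>t = - int b..int b. 1 / (u + real_of_int t) ^ 2) \<ge> pi ^ 2 / sin (pi * u) ^ 2 - 2 / real b"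
proof -
  have "(\<lambda>k. inverse ((u + of_nat k) ^ 2)) sums Polygamma 1 u"
    using Polygamma_LIMSEQ[of u 1] assms(3) by (simp add: numeral_2_eq_2)
  then have "Polygamma 1 u \<le> (\<Sum>k<Suc b. inverse ((u + of_nat k) ^ 2)) + 1 / (real (Suc b) + -1)"
  proof (rule sums_le_telescoping_tail)
    fix k assume "Suc b \<le> k"
    then show "inverse ((u + of_nat k) ^ 2) \<le> 1 / (real k + -1) - 1 / (real k + 1 + -1)"
      using assms inverse_square_le_telescoping[of "real k - 1" "u + real k"] by auto
  qed (use assms in simp)
  then have upper: "Polygamma 1 u \<le> (\<Sum>k<Suc b. inverse ((u + of_nat k) ^ 2)) + 1 / real b"
    by simp
  have "(\<lambda>k. inverse ((1 - u + of_nat k) ^ 2)) sums Polygamma 1 (1 - u)"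
    using Polygamma_LIMSEQ[of "1 - u" 1] assms(2) by (simp add: numeral_2_eq_2)
  then have "Polygamma 1 (1 - u) \<le> (\<Sum>k<b. inverse ((1 - u + of_nat k) ^ 2)) + 1 / (real b + 0)"
  proof (rule sums_le_telescoping_tail)
    fix k assume "b \<le> k"
    then show "inverse ((1 - u + of_nat k) ^ 2) \<le> 1 / (real k + 0) - 1 / (real k + 1 + 0)"
      using assms inverse_square_le_telescoping[of "real k" "1 - u + real k"] by auto
  qed (use assms in simp)
  then have lower: "Polygamma 1 (1 - u) \<le> (\<Sum>k<b. inverse ((1 - u + of_nat k) ^ 2)) + 1 / real b"
    by simp
  have "(\<Sum>t = - int b..int b. 1 / (u + real_of_int t) ^ 2)
      = (\<Sum>k<Suc b. inverse ((u + of_nat k) ^ 2)) + (\<Sum>k<b. inverse ((1 - u + of_nat k) ^ 2))"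
    by (simp add: sum_int_symmetric_interval inverse_eq_divide power2_commute algebra_simps)
  moreover have "pi ^ 2 / sin (pi * u) ^ 2 = Polygamma 1 u + Polygamma 1 (1 - u)"
    using assms by (intro Polygamma_one_reflection_real[symmetric] not_Ints_if_abs_less_one) auto
  ultimately show ?thesis
    using upper lower by linarith
qed

lemma abs_sin_minus_self_le:
  fixes x :: real
  shows "\<bar>sin x - x\<bar> \<le> \<bar>x\<bar> ^ 3 / 6"
proof -
  have "\<bar>sin x - (\<Sum>m<3. sin_coeff m * x ^ m)\<bar> \<le> inverse (fact 3) * \<bar>x\<bar> ^ 3"
    by (rule Maclaurin_sin_bound)
  moreover have "(\<Sum>m<3. sin_coeff m * x ^ m) = x"
    by (simp add: eval_nat_numeral lessThan_Suc sin_coeff_def)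
  ultimately show ?thesis
    by (simp add: eval_nat_numeral)
qed

lemma sin_square_add_second_order:
  fixes a d :: real assumes "\<bar>d\<bar> \<le> 2"
  shows "\<bar>sin (a + d) ^ 2 - sin a ^ 2 - 2 * d * sin a * cos a\<bar> \<le> 3 * d ^ 2"
proof -
  have expand: "sin (a + d) ^ 2 - sin a ^ 2 - 2 * d * sin a * cos a
      = (cos a ^ 2 - sin a ^ 2) * sin d ^ 2 + sin (2 * a) * (sin (2 * d) - 2 * d) / 2"
  proof -
    have "sin a ^ 2 * cos d ^ 2 = sin a ^ 2 - sin a ^ 2 * sin d ^ 2"
      by (simp add: cos_squared_eq algebra_simps)
    then show ?thesis
      unfolding sin_add sin_double by (simp add: power2_eq_square field_simps)
  qed
  have "\<bar>cos a ^ 2 - sin a ^ 2\<bar> \<le> 1"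
    using sin_cos_squared_add[of a] zero_le_power2[of "sin a"] zero_le_power2[of "cos a"]
    by linarith
  moreover have "sin d ^ 2 \<le> d ^ 2"
    using abs_sin_x_le_abs_x[of d] by (simp add: abs_le_square_iff)
  ultimately have "\<bar>(cos a ^ 2 - sin a ^ 2) * sin d ^ 2\<bar> \<le> d ^ 2"
    unfolding abs_mult using mult_mono[of "\<bar>cos a ^ 2 - sin a ^ 2\<bar>" 1 "sin d ^ 2" "d ^ 2"] by simp
  moreover have "\<bar>sin (2 * a) * (sin (2 * d) - 2 * d) / 2\<bar> \<le> \<bar>sin (2 * d) - 2 * d\<bar> / 2"
    by (simp add: abs_mult mult_left_le_one_le)
  moreover have "\<dots> \<le> \<bar>2 * d\<bar> ^ 3 / 12"
    using abs_sin_minus_self_le[of "2 * d"] by simp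
  moreover have "\<bar>2 * d\<bar> ^ 3 / 12 \<le> 2 * d ^ 2"
  proof -
    have "\<bar>2 * d\<bar> ^ 3 / 12 = (2 / 3) * \<bar>d\<bar> * d ^ 2"
      by (simp add: power3_eq_cube power2_eq_square abs_mult)
    also have "\<dots> \<le> 2 * d ^ 2"
      using assms by (intro mult_right_mono) auto
    finally show ?thesis .
  qed
  ultimately show ?thesis
    unfolding expand by linarith
qed

text \<open>The first-order terms cancel exactly when \<open>p * d = q * e\<close>.\<close>

lemma weighted_sin_square_ge:
  fixes p q a d e :: real
  assumes "0 \<le> p" "0 \<le> q" "p * d = q * e" "\<bar>d\<bar> \<le> 2" "\<bar>e\<bar> \<le> 2"
  shows "p * sin (a + d) ^ 2 + q * sin (a - e) ^ 2 \<ge> (p + q) * sin a ^ 2 - 3 * (p * d ^ 2 + q * e ^ 2)"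
proof -
  have "sin (a + d) ^ 2 \<ge> sin a ^ 2 + 2 * d * sin a * cos a - 3 * d ^ 2"
    using sin_square_add_second_order[OF assms(4), of a] by (simp add: abs_le_iff)
  then have "p * sin (a + d) ^ 2 \<ge> p * (sin a ^ 2 + 2 * d * sin a * cos a - 3 * d ^ 2)"
    using assms(1) by (rule mult_left_mono)
  moreover have "sin (a - e) ^ 2 \<ge> sin a ^ 2 - 2 * e * sin a * cos a - 3 * e ^ 2"
    using sin_square_add_second_order[of "- e" a] assms(5) by (simp add: abs_le_iff)
  then have "q * sin (a - e) ^ 2 \<ge> q * (sin a ^ 2 - 2 * e * sin a * cos a - 3 * e ^ 2)"
    using assms(2) by (rule mult_left_mono)
  moreover have "p * (2 * d * sin a * cos a) = q * (2 * e * sin a * cos a)"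
    using assms(3) by (metis mult.assoc mult.left_commute)
  ultimately show ?thesis
    unfolding ring_distribs by linarith
qed

text \<open>Splitting \<open>N = L r + \<beta>\<close> turns the two frequencies \<open>L\<close> and \<open>L + 1\<close> into
  perturbations \<open>- e\<close> and \<open>d\<close> of the frequency \<open>N / r\<close>, with \<open>\<beta> d = (r - \<beta>) e\<close>.\<close>

lemma weighted_sin_square_frequencies_ge:
  fixes r N L \<beta> \<alpha> :: real
  assumes "0 < r" "r \<le> N" "0 \<le> \<beta>" "\<beta> \<le> r" "N = L * r + \<beta>" "\<bar>\<alpha>\<bar> \<le> N / 2"
  shows "\<beta> * sin ((L + 1) * (pi * \<alpha> / N)) ^ 2 + (r - \<beta>) * sin (L * (pi * \<alpha> / N)) ^ 2
    \<ge> r * sin (pi * \<alpha> / r) ^ 2 - 3 * pi ^ 2 * \<alpha> ^ 2 / N"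
proof -
  define d where "d = pi * (r - \<beta>) * \<alpha> / (r * N)"
  define e where "e = pi * \<beta> * \<alpha> / (r * N)"
  have N: "N > 0"
    using assms(1,2) by linarith
  have small: "\<bar>pi * c * \<alpha> / (r * N)\<bar> \<le> 2" if "0 \<le> c" "c \<le> r" for c
  proof -
    have "\<bar>pi * c * \<alpha> / (r * N)\<bar> = pi * (c / r) * (\<bar>\<alpha>\<bar> / N)"
      using that assms(1) N by (simp add: abs_mult abs_divide)
    also have "\<dots> \<le> pi * 1 * (1 / 2)"
      using that assms N by (intro mult_mono) (auto simp: field_simps)
    also have "\<dots> \<le> 2"
      using pi_less_4 by simp
    finally show ?thesis .
  qed
  have "(L + 1) * (pi * \<alpha> / N) = pi * \<alpha> / r + d"
    using assms(1) N unfolding d_def by (simp add: field_simps) (use assms(5) in algebra)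
  moreover have "L * (pi * \<alpha> / N) = pi * \<alpha> / r - e"
    using assms(1) N unfolding e_def by (simp add: field_simps) (use assms(5) in algebra)
  moreover have "\<beta> * d = (r - \<beta>) * e"
    unfolding d_def e_def by (simp add: field_simps)
  moreover have "\<bar>d\<bar> \<le> 2" "\<bar>e\<bar> \<le> 2"
    unfolding d_def e_def using small[of "r - \<beta>"] small[of \<beta>] assms(3,4) by auto
  moreover have "\<beta> * d ^ 2 + (r - \<beta>) * e ^ 2 \<le> pi ^ 2 * \<alpha> ^ 2 / N"
  proof -
    have "\<beta> * d ^ 2 + (r - \<beta>) * e ^ 2 = (pi * \<alpha> / (r * N)) ^ 2 * (\<beta> * (r - \<beta>) * r)"
      unfolding d_def e_def using assms(1) N by (simp add: power2_eq_square field_simps)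
    also have "\<dots> \<le> (pi * \<alpha> / (r * N)) ^ 2 * (r * r * N)"
      using assms(1-4) by (intro mult_left_mono mult_mono) auto
    also have "\<dots> = pi ^ 2 * \<alpha> ^ 2 / N"
      using assms(1) N by (simp add: power2_eq_square field_simps)
    finally show ?thesis .
  qed
  ultimately show ?thesis
    using weighted_sin_square_ge[of \<beta> "r - \<beta>" d e "pi * \<alpha> / r"] assms(3,4) by auto
qed

lemma Pfun_eq_weighted_sin_square:
  fixes r m l :: nat and \<alpha> :: real
  defines "N \<equiv> (2::nat) ^ (m + l)"
  defines "\<phi> \<equiv> pi * \<alpha> / real N"
  assumes "\<alpha> / real N \<notin> \<int>"
  shows "Pfun r m l \<alpha> = (real (N mod r) * sin ((real (N div r) + 1) * \<phi>) ^ 2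
      + (real r - real (N mod r)) * sin (real (N div r) * \<phi>) ^ 2) / (real N ^ 2 * sin \<phi> ^ 2)"
proof -
  have "sin \<phi> \<noteq> 0"
    using not_Ints_reflection_conditions(1)[OF assms(3)] by (simp add: \<phi>_def)
  moreover have "1 - cos (2 * pi * \<alpha> * real (N div r + 1) / real N) = 2 * sin ((real (N div r) + 1) * \<phi>) ^ 2"
    using cos_double_sin[of "(real (N div r) + 1) * \<phi>"] by (simp add: \<phi>_def field_simps)
  moreover have "1 - cos (2 * pi * \<alpha> * real (N div r) / real N) = 2 * sin (real (N div r) * \<phi>) ^ 2"
    using cos_double_sin[of "real (N div r) * \<phi>"] by (simp add: \<phi>_def field_simps)
  moreover have "1 - cos (2 * pi * \<alpha> / real N) = 2 * sin \<phi> ^ 2"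
    using cos_double_sin[of \<phi>] by (simp add: \<phi>_def field_simps)
  ultimately show ?thesis
    unfolding Pfun_def Let_def N_def[symmetric] using assms(3)
    by (simp only: if_False) (simp add: add_divide_distrib)
qed

lemma Pfun_ge_sinc_square:
  fixes r m l :: nat and \<alpha> :: real
  assumes "r \<ge> 1" "r \<le> 2 ^ (m + l)" "\<alpha> \<noteq> 0" "\<bar>\<alpha>\<bar> < 2 ^ (m + l) / 2"
  shows "Pfun r m l \<alpha> \<ge> real r * sin (pi * \<alpha> / real r) ^ 2 / (pi ^ 2 * \<alpha> ^ 2) - 3 / 2 ^ (m + l)"
proof -
  define N where "N = (2::nat) ^ (m + l)"
  define \<phi> where "\<phi> = pi * \<alpha> / real N"
  define Num where "Num = real (N mod r) * sin ((real (N div r) + 1) * \<phi>) ^ 2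
      + (real r - real (N mod r)) * sin (real (N div r) * \<phi>) ^ 2"
  have N: "real N > 0" "real r \<le> real N" "\<bar>\<alpha>\<bar> < real N / 2"
    using assms(2,4) by (simp_all add: N_def)
  have "\<alpha> / real N \<notin> \<int>"
    using assms(3) N by (intro not_Ints_if_abs_less_one) (auto simp: abs_divide)
  then have P: "Pfun r m l \<alpha> = Num / (real N ^ 2 * sin \<phi> ^ 2)" and "sin \<phi> \<noteq> 0"
    using Pfun_eq_weighted_sin_square[of \<alpha> m l r] not_Ints_reflection_conditions(1)[of "\<alpha> / real N"]
    by (simp_all add: N_def \<phi>_def Num_def)
  have "real N = real (N div r) * real r + real (N mod r)" and mod_le: "real (N mod r) \<le> real r"
    using assms(1) by (simp_all flip: of_nat_mult of_nat_add)
  then have Num_ge: "Num \<ge> real r * sin (pi * \<alpha> / real r) ^ 2 - 3 * pi ^ 2 * \<alpha> ^ 2 / real N"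
    unfolding Num_def \<phi>_def using assms(1) N
    by (intro weighted_sin_square_frequencies_ge) simp_all
  have "Num \<ge> 0"
    unfolding Num_def using mod_le by simp
  have "sin \<phi> ^ 2 \<le> \<phi> ^ 2"
    using abs_sin_x_le_abs_x[of \<phi>] by (simp add: abs_le_square_iff)
  then have "real N ^ 2 * sin \<phi> ^ 2 \<le> real N ^ 2 * \<phi> ^ 2"
    by (rule mult_left_mono) simp
  also have "\<dots> = pi ^ 2 * \<alpha> ^ 2"
    using N by (simp add: \<phi>_def power_divide power_mult_distrib)
  finally have "Pfun r m l \<alpha> \<ge> Num / (pi ^ 2 * \<alpha> ^ 2)"
    unfolding P using \<open>Num \<ge> 0\<close> \<open>sin \<phi> \<noteq> 0\<close> N assms(3)
    by (intro divide_left_mono mult_pos_pos) auto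
  moreover have "Num / (pi ^ 2 * \<alpha> ^ 2) \<ge> (real r * sin (pi * \<alpha> / real r) ^ 2 - 3 * pi ^ 2 * \<alpha> ^ 2 / real N)
      / (pi ^ 2 * \<alpha> ^ 2)"
    using Num_ge by (intro divide_right_mono) auto
  ultimately have "Pfun r m l \<alpha> \<ge> (real r * sin (pi * \<alpha> / real r) ^ 2 - 3 * pi ^ 2 * \<alpha> ^ 2 / real N)
      / (pi ^ 2 * \<alpha> ^ 2)"
    by linarith
  then show ?thesis
    using assms(3) N by (simp add: N_def diff_divide_distrib)
qed

lemma Pfun_zero_ge:
  fixes r m l :: nat assumes "r \<ge> 1"
  shows "Pfun r m l 0 \<ge> 1 / real r"
proof -
  define N where "N = (2::nat) ^ (m + l)"
  have N: "real N = real (N div r) * real r + real (N mod r)" "real N > 0"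
    by (simp_all add: N_def flip: of_nat_mult of_nat_add)
  have "real (N mod r) * real (N mod r) \<le> real (N mod r) * real r"
    using assms by (intro mult_left_mono) simp_all
  then have "real N ^ 2 \<le> (real (N div r) ^ 2 * real r + (2 * real (N div r) + 1) * real (N mod r)) * real r"
    unfolding N(1) by (simp add: power2_eq_square algebra_simps)
  then have "1 / real r \<le> (real (N div r) ^ 2 * real r + (2 * real (N div r) + 1) * real (N mod r)) / real N ^ 2"
    using N(2) assms by (simp add: field_simps)
  then show ?thesis
    by (simp add: Pfun_def Let_def N_def[symmetric])
qed

definition sinc_sq_kernel :: "nat \<Rightarrow> real \<Rightarrow> real" where
  "sinc_sq_kernel r x =
    (if x = 0 then 1 / real r else real r * sin (pi * x / real r) ^ 2 / (pi ^ 2 * x ^ 2))"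

lemma Pfun_ge_sinc_sq_kernel:
  fixes r m l :: nat and \<alpha> :: real
  assumes "r \<ge> 1" "r \<le> 2 ^ (m + l)" "\<bar>\<alpha>\<bar> < 2 ^ (m + l) / 2"
  shows "Pfun r m l \<alpha> \<ge> sinc_sq_kernel r \<alpha> - 3 / 2 ^ (m + l)"
proof (cases "\<alpha> = 0")
  case True
  then have "sinc_sq_kernel r \<alpha> = 1 / real r"
    by (simp add: sinc_sq_kernel_def)
  moreover have "0 < 3 / (2::real) ^ (m + l)"
    by simp
  ultimately show ?thesis
    using Pfun_zero_ge[OF assms(1), of m l] unfolding True by linarith
qed (use Pfun_ge_sinc_square[OF assms(1,2) _ assms(3)] in \<open>simp add: sinc_sq_kernel_def\<close>)

lemma sin_square_pi_add_int:
  fixes x :: real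
  shows "sin (pi * (x + of_int t)) ^ 2 = sin (pi * x) ^ 2"
proof -
  have "cos (pi * of_int t) ^ 2 = 1"
    using sin_cos_squared_add[of "pi * of_int t"] by simp
  then show ?thesis
    by (simp add: distrib_left sin_add power_mult_distrib)
qed

lemma sinc_sq_kernel_shift:
  fixes r :: nat and u :: real
  assumes "r \<ge> 1" "u \<notin> \<int>"
  shows "sinc_sq_kernel r (real r * (u + of_int t))
    = sin (pi * u) ^ 2 / (pi ^ 2 * real r) * (1 / (u + of_int t) ^ 2)"
proof -
  have "u + of_int t \<noteq> 0"
  proof
    assume "u + of_int t = 0"
    then have "u = of_int (- t)"
      by simp
    with assms(2) show False
      by simp
  qed
  moreover have "R * S / (pi ^ 2 * (R * y) ^ 2) = S / (pi ^ 2 * R) * (1 / y ^ 2)"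
    if "R \<noteq> 0" "y \<noteq> 0" for R S y :: real
    using that by (simp add: field_simps power2_eq_square)
  ultimately show ?thesis
    using assms(1) by (simp add: sinc_sq_kernel_def sin_square_pi_add_int)
qed

lemma sum_sinc_sq_kernel_ge:
  fixes r b :: nat and \<alpha> :: real
  assumes "r \<ge> 1" "b \<ge> 1" "- real r / 2 < \<alpha>" "\<alpha> \<le> real r / 2"
  shows "(\<Sum>t = - int b..int b. sinc_sq_kernel r (\<alpha> + real r * of_int t))
    \<ge> 1 / real r - 2 / (pi ^ 2 * real r * real b)"
proof (cases "\<alpha> = 0")
  case True
  have "sinc_sq_kernel r (real r * of_int t) = (if t = 0 then 1 / real r else 0)" for t
    using assms(1) sin_npi_int[of t] by (simp add: sinc_sq_kernel_def mult.commute)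
  then show ?thesis
    using True by simp
next
  case False
  define u where "u = \<alpha> / real r"
  define c where "c = sin (pi * u) ^ 2 / (pi ^ 2 * real r)"
  have u: "-1/2 < u" "u \<le> 1/2" "u \<noteq> 0"
    using assms(1,3,4) False by (auto simp: u_def field_simps)
  then have "u \<notin> \<int>"
    by (intro not_Ints_if_abs_less_one) auto
  have "\<alpha> + real r * of_int t = real r * (u + of_int t)" for t
    using assms(1) by (simp add: u_def field_simps)
  then have "(\<Sum>t = - int b..int b. sinc_sq_kernel r (\<alpha> + real r * of_int t))
      = c * (\<Sum>t = - int b..int b. 1 / (u + of_int t) ^ 2)"
    using sinc_sq_kernel_shift[OF assms(1) \<open>u \<notin> \<int>\<close>] by (simp add: c_def sum_distrib_left)
  also have "\<dots> \<ge> c * (pi ^ 2 / sin (pi * u) ^ 2 - 2 / real b)"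
    using sum_inverse_square_shifts_ge[OF u assms(2)] by (intro mult_left_mono) (simp_all add: c_def)
  also have "c * (pi ^ 2 / sin (pi * u) ^ 2 - 2 / real b)
      = 1 / real r - sin (pi * u) ^ 2 * (2 / (pi ^ 2 * real r * real b))"
    using not_Ints_reflection_conditions(1)[OF \<open>u \<notin> \<int>\<close>] assms(1) by (simp add: c_def field_simps)
  also have "\<dots> \<ge> 1 / real r - 2 / (pi ^ 2 * real r * real b)"
    using mult_right_mono[of "sin (pi * u) ^ 2" 1 "2 / (pi ^ 2 * real r * real b)"]
    by (simp add: abs_square_le_1)
  finally show ?thesis .
qed

lemma sum_Pfun_ge:
  fixes r m l b :: nat and \<alpha> :: real
  assumes "r \<ge> 1" "b \<ge> 1" "(2 * real b + 1) * real r < 2 ^ (m + l)"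
    and "- real r / 2 < \<alpha>" "\<alpha> \<le> real r / 2"
  shows "(\<Sum>t = - int b..int b. Pfun r m l (\<alpha> + real r * of_int t))
    \<ge> 1 / real r - 2 / (pi ^ 2 * real r * real b) - 3 * (2 * real b + 1) / 2 ^ (m + l)"
proof -
  have "real r \<le> (2 * real b + 1) * real r"
    by (simp add: algebra_simps)
  then have "real r \<le> 2 ^ (m + l)"
    using assms(3) by linarith
  then have r_le: "r \<le> 2 ^ (m + l)"
    by (metis of_nat_le_iff of_nat_numeral of_nat_power)
  have "\<bar>\<alpha> + real r * of_int t\<bar> < 2 ^ (m + l) / 2" if "t \<in> {- int b..int b}" for t
  proof -
    have "\<bar>real_of_int t\<bar> \<le> real b"
      using that by auto
    then have "\<bar>real r * of_int t\<bar> \<le> real r * real b"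
      by (simp add: abs_mult mult_left_mono)
    moreover have "real r / 2 + real r * real b < 2 ^ (m + l) / 2"
      using assms(3) by (simp add: algebra_simps)
    ultimately show ?thesis
      using abs_triangle_ineq[of \<alpha> "real r * of_int t"] assms(4,5) by linarith
  qed
  then have "(\<Sum>t = - int b..int b. sinc_sq_kernel r (\<alpha> + real r * of_int t) - 3 / 2 ^ (m + l))
      \<le> (\<Sum>t = - int b..int b. Pfun r m l (\<alpha> + real r * of_int t))"
    using Pfun_ge_sinc_sq_kernel[OF assms(1) r_le] by (intro sum_mono) auto
  moreover have "(\<Sum>t = - int b..int b. sinc_sq_kernel r (\<alpha> + real r * of_int t) - 3 / 2 ^ (m + l))
      = (\<Sum>t = - int b..int b. sinc_sq_kernel r (\<alpha> + real r * of_int t))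
        - 3 * (2 * real b + 1) / 2 ^ (m + l)"
    by (simp add: sum_subtractf)
  ultimately show ?thesis
    using sum_sinc_sq_kernel_ge[OF assms(1,2,4,5)] by linarith
qed

theorem theorem2:
  fixes r m l :: nat and \<alpha>0 :: real and B :: int
  assumes "r \<ge> 2" and "m \<ge> 1" and "l \<ge> 1" and "r < 2 ^ m"
    and "- real r / 2 < \<alpha>0" and "\<alpha>0 \<le> real r / 2"
    and "1 \<le> B" and "real_of_int B < (2 ^ (m + l) / real r - 1) / 2"
  shows "(\<Sum>t = -B..B. Pfun r m l (\<alpha>0 + real r * real_of_int t))
    \<ge> 1 / real r * (1 - 1 / pi ^ 2 * (2 / real_of_int B + 1 / real_of_int B ^ 2
          + 1 / (3 * real_of_int B ^ 3)))
      - pi ^ 2 * (2 * real_of_int B + 1) / 2 ^ (m + l)"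
proof -
  obtain b :: nat where B: "B = int b"
    using assms(7) by (metis nonneg_int_cases zero_le_one order_trans)
  with assms(7) have b: "b \<ge> 1"
    by simp
  have "(2 * real b + 1) * real r < 2 ^ (m + l)"
    using assms(1,8) by (simp add: B field_simps)
  then have "(\<Sum>t = -B..B. Pfun r m l (\<alpha>0 + real r * real_of_int t))
      \<ge> 1 / real r - 2 / (pi ^ 2 * real r * real b) - 3 * (2 * real b + 1) / 2 ^ (m + l)"
    unfolding B using sum_Pfun_ge[OF _ b _ assms(5,6)] assms(1) by simp
  moreover have "1 / real r * (1 - 1 / pi ^ 2 * (2 / real b + 1 / real b ^ 2 + 1 / (3 * real b ^ 3)))
      = 1 / real r - 2 / (pi ^ 2 * real r * real b)
        - (1 / real b ^ 2 + 1 / (3 * real b ^ 3)) / (pi ^ 2 * real r)"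
    by (simp add: algebra_simps add_divide_distrib)
  moreover have "0 \<le> (1 / real b ^ 2 + 1 / (3 * real b ^ 3)) / (pi ^ 2 * real r)"
    by simp
  moreover have "3 * (2 * real b + 1) / 2 ^ (m + l) \<le> pi ^ 2 * (2 * real b + 1) / 2 ^ (m + l)"
    using pi_gt3 power_mono[of 3 pi 2] by (intro divide_right_mono mult_right_mono) auto
  ultimately show ?thesis
    unfolding B of_int_of_nat_eq by linarith
qed

end
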